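(* Let $\mathcal{A}\in\mathbb{R}^{m\times m\times n}$ be $(1,2)$-symmetric and let $r_1\le m$, $r_3\le n$. Assume that the solution $(U,V,W)$ of the best rank-$(r_1,r_1,r_3)$ approximation problem for $\mathcal{A}$ is unique (as an equivalence class). Then a representative of the solution can be chosen with $U=V$, and for this representative the core tensor $\mathcal{F}=\mathcal{A}\cdot(U,U,W)$ is $(1,2)$-symmetric.
   Context: A tensor $\mathcal{A}\in\mathbb{R}^{m\times m\times n}$ is $(1,2)$-symmetric if $\mathcal{A}(i,j,k)=\mathcal{A}(j,i,k)$ for all $i,j,k$. Multilinear multiplication: for $\mathcal{H}\in\mathbb{R}^{p\times q\times r}$ and matrices $X\in\mathbb{R}^{l\times p}$, $Y\in\mathbb{R}^{m\times q}$, $Z\in\mathbb{R}^{n\times r}$, $(X,Y,Z)\cdot\mathcal{H}\in\mathbb{R}^{l\times m\times n}$ has entries $\sum_{\alpha,\beta,\gamma}x_{i\alpha}y_{j\beta}z_{k\gamma}h_{\alpha\beta\gamma}$, and $\mathcal{A}\cdot(X,Y,Z):=(X^{T},Y^{T},Z^{T})\cdot\mathcal{A}\in\mathbb{R}^{p\times q\times r}$. The norm is the Frobenius norm $\|\mathcal{A}\|^2=\sum a_{\alpha\beta\gamma}^2$. The best rank-$(r_1,r_2,r_3)$ approximation problem for $\mathcal{A}$ is $\min\|\mathcal{A}-(X,Y,Z)\cdot\mathcal{H}\|$ over $X,Y,Z$ with orthonormal columns ($r_1,r_2,r_3$ columns respectively) and cores $\mathcal{H}\in\mathbb{R}^{r_1\times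 r_2\times r_3}$, equivalently $\max\|\mathcal{A}\cdot(X,Y,Z)\|$ over such $X,Y,Z$; a solution is a triple $(U,V,W)$, with core $\mathcal{F}=\mathcal{A}\cdot(U,V,W)$. A solution is regarded as an equivalence class: $(U,V,W)$ is identified with $(UQ_1,VQ_2,WQ_3)$ for all orthogonal $Q_i\in\mathbb{R}^{r_i\times r_i}$; "unique solution" means the equivalence class of maximizers is unique. *)

theory Defs
  imports Complex_Main
begin

text \<open>Third-order tensors in R^(p x q x r) are functions nat => nat => nat => real, only
the entries with indices below the dimensions are relevant. Matrices in R^(p x r) are
functions nat => nat => real, indexed (row, column), only entries below the dimensions
are relevant.\<close>

type_synonym tensor3 = "nat \<Rightarrow> nat \<Rightarrow> nat \<Rightarrow> real"
type_synonym mat = "nat \<Rightarrow> nat \<Rightarrow> real"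

definition sym12 :: "nat \<Rightarrow> nat \<Rightarrow> tensor3 \<Rightarrow> bool" where
  "sym12 m n A \<longleftrightarrow> (\<forall>i<m. \<forall>j<m. \<forall>k<n. A i j k = A j i k)"

definition orthonormal_cols :: "nat \<Rightarrow> nat \<Rightarrow> mat \<Rightarrow> bool" where
  "orthonormal_cols p r X \<longleftrightarrow>
     (\<forall>a<r. \<forall>b<r. (\<Sum>i<p. X i a * X i b) = (if a = b then 1 else 0))"

text \<open>A . (X,Y,Z) = (X^T, Y^T, Z^T) . A, for A of size p x q x s.\<close>
definition tmul :: "nat \<Rightarrow> nat \<Rightarrow> nat \<Rightarrow> tensor3 \<Rightarrow> mat \<Rightarrow> mat \<Rightarrow> mat \<Rightarrow> tensor3" where
  "tmul p q s A X Y Z = (\<lambda>a b c.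
     (\<Sum>i<p. \<Sum>j<q. \<Sum>k<s. X i a * Y j b * Z k c * A i j k))"

definition fro_sq :: "nat \<Rightarrow> nat \<Rightarrow> nat \<Rightarrow> tensor3 \<Rightarrow> real" where
  "fro_sq p q s H = (\<Sum>a<p. \<Sum>b<q. \<Sum>c<s. (H a b c)\<^sup>2)"

text \<open>(X,Y,Z) is a solution of the best rank-(r1,r2,r3) approximation problem for the
p x q x s tensor A, in the equivalent form: maximize ||A . (X,Y,Z)|| over X,Y,Z with
orthonormal columns.\<close>
definition is_best_lra ::
  "nat \<Rightarrow> nat \<Rightarrow> nat \<Rightarrow> tensor3 \<Rightarrow> nat \<Rightarrow> nat \<Rightarrow> nat \<Rightarrow> mat \<Rightarrow> mat \<Rightarrow> mat \<Rightarrow> bool" where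
  "is_best_lra p q s A r1 r2 r3 X Y Z \<longleftrightarrow>
     orthonormal_cols p r1 X \<and> orthonormal_cols q r2 Y \<and> orthonormal_cols s r3 Z \<and>
     (\<forall>X' Y' Z'. orthonormal_cols p r1 X' \<and> orthonormal_cols q r2 Y' \<and> orthonormal_cols s r3 Z'
        \<longrightarrow> fro_sq r1 r2 r3 (tmul p q s A X' Y' Z') \<le> fro_sq r1 r2 r3 (tmul p q s A X Y Z))"

definition orthogonal_mat :: "nat \<Rightarrow> mat \<Rightarrow> bool" where
  "orthogonal_mat r Q \<longleftrightarrow> orthonormal_cols r r Q"

definition right_mult_eq :: "nat \<Rightarrow> nat \<Rightarrow> mat \<Rightarrow> mat \<Rightarrow> mat \<Rightarrow> bool" where
  "right_mult_eq p r X Q X' \<longleftrightarrow> (\<forall>i<p. \<forall>a<r. X' i a = (\<Sum>b<r. X i b * Q b a))"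

definition triple_equiv ::
  "nat \<Rightarrow> nat \<Rightarrow> nat \<Rightarrow> nat \<Rightarrow> nat \<Rightarrow> nat \<Rightarrow> mat \<Rightarrow> mat \<Rightarrow> mat \<Rightarrow> mat \<Rightarrow> mat \<Rightarrow> mat \<Rightarrow> bool" where
  "triple_equiv p q s r1 r2 r3 X Y Z X' Y' Z' \<longleftrightarrow>
     (\<exists>Q1 Q2 Q3. orthogonal_mat r1 Q1 \<and> orthogonal_mat r2 Q2 \<and> orthogonal_mat r3 Q3 \<and>
        right_mult_eq p r1 X Q1 X' \<and> right_mult_eq q r2 Y Q2 Y' \<and> right_mult_eq s r3 Z Q3 Z')"

end

theory Submission
  imports Defs
begin

text \<open>Since \<open>\<A>\<close> is (1,2)-symmetric, swapping the first two factors of a solution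
  \<open>(U, V, W)\<close> gives another solution \<open>(V, U, W)\<close>; uniqueness yields \<open>V = U Q\<close> with
  \<open>Q\<close> orthogonal. By Bessel's inequality, multiplying the second factor by \<open>Q\<close> cannot
  increase the norm of the core, so \<open>(U, U, W)\<close> is a solution as well, hence a
  representative of the unique class. Its core is (1,2)-symmetric because \<open>\<A>\<close> is.\<close>

lemma orthonormal_cols_Bessel:
  fixes Q :: mat and x :: "nat \<Rightarrow> real"
  assumes "orthonormal_cols p r Q"
  shows "(\<Sum>b<r. (\<Sum>d<p. Q d b * x d)\<^sup>2) \<le> (\<Sum>d<p. (x d)\<^sup>2)"
proof -
  define y where "y b = (\<Sum>d<p. Q d b * x d)" for b
  define proj where "proj d = (\<Sum>b<r. y b * Q d b)" for d
  have orth: "\<And>b b'. b < r \<Longrightarrow> b' < r \<Longrightarrow> (\<Sum>d<p. Q d b * Q d b') = (if b = b' then 1 else 0)"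
    using assms unfolding orthonormal_cols_def by blast
  have inner: "(\<Sum>d<p. x d * proj d) = (\<Sum>b<r. (y b)\<^sup>2)"
    by (simp add: proj_def y_def sum_distrib_left sum_distrib_right power2_eq_square mult_ac
        sum.swap[of _ "{..<r}"])
  have "(\<Sum>d<p. (proj d)\<^sup>2) = (\<Sum>b<r. \<Sum>b'<r. y b * y b' * (\<Sum>d<p. Q d b * Q d b'))"
    by (simp add: proj_def power2_eq_square sum_distrib_left sum_distrib_right mult_ac
        sum.swap[of _ "{..<p}"])
  also have "\<dots> = (\<Sum>b<r. \<Sum>b'<r. y b * y b' * (if b = b' then 1 else 0))"
    by (intro sum.cong refl) (simp add: orth)
  also have "\<dots> = (\<Sum>b<r. (y b)\<^sup>2)"
    by (simp add: power2_eq_square if_distrib cong: if_cong)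
  finally have norm_proj: "(\<Sum>d<p. (proj d)\<^sup>2) = (\<Sum>b<r. (y b)\<^sup>2)" .
  have "0 \<le> (\<Sum>d<p. (x d - proj d)\<^sup>2)"
    by (simp add: sum_nonneg)
  also have "\<dots> = (\<Sum>d<p. (x d)\<^sup>2) - 2 * (\<Sum>d<p. x d * proj d) + (\<Sum>d<p. (proj d)\<^sup>2)"
    by (simp add: power2_diff sum.distrib sum_subtractf sum_distrib_left mult_ac)
  finally show ?thesis
    using inner norm_proj by (simp add: y_def)
qed

lemma tmul_swap_sym12:
  assumes "sym12 m n A"
  shows "tmul m m n A Y X Z a b c = tmul m m n A X Y Z b a c"
proof -
  have "tmul m m n A Y X Z a b c = (\<Sum>i<m. \<Sum>j<m. \<Sum>k<n. Y i a * X j b * Z k c * A j i k)"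
    using assms unfolding tmul_def sym12_def by (intro sum.cong refl) auto
  also have "\<dots> = tmul m m n A X Y Z b a c"
    unfolding tmul_def by (subst sum.swap) (simp add: mult_ac)
  finally show ?thesis .
qed

lemma sym12_tmul_same:
  assumes "sym12 m n A"
  shows "sym12 r s (tmul m m n A U U W)"
  unfolding sym12_def using tmul_swap_sym12[OF assms, of U U W] by simp

lemma fro_sq_tmul_swap_sym12:
  assumes "sym12 m n A"
  shows "fro_sq r r s (tmul m m n A Y X Z) = fro_sq r r s (tmul m m n A X Y Z)"
  unfolding fro_sq_def tmul_swap_sym12[OF assms, of Y X] by (subst sum.swap) simp

lemma is_best_lra_swap_sym12:
  assumes "sym12 m n A" "is_best_lra m m n A r r s X Y Z"
  shows "is_best_lra m m n A r r s Y X Z"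
  using assms(2) fro_sq_tmul_swap_sym12[OF assms(1)] unfolding is_best_lra_def by metis

lemma tmul_right_mult_second:
  assumes "right_mult_eq q r Y Q Y'" "b < r"
  shows "tmul p q s A X Y' Z a b c = (\<Sum>d<r. Q d b * tmul p q s A X Y Z a d c)"
proof -
  have "tmul p q s A X Y' Z a b c
      = (\<Sum>i<p. \<Sum>j<q. \<Sum>k<s. X i a * (\<Sum>d<r. Y j d * Q d b) * Z k c * A i j k)"
    using assms unfolding tmul_def right_mult_eq_def by (intro sum.cong refl) auto
  also have "\<dots> = (\<Sum>d<r. Q d b * tmul p q s A X Y Z a d c)"
    unfolding tmul_def
    by (simp add: sum_distrib_left sum_distrib_right mult_ac sum.swap[of _ "{..<r}"])
  finally show ?thesis .
qed

lemma fro_sq_tmul_right_mult_second_le: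
  assumes "orthogonal_mat r2 Q" "right_mult_eq q r2 Y Q Y'"
  shows "fro_sq r1 r2 r3 (tmul p q s A X Y' Z) \<le> fro_sq r1 r2 r3 (tmul p q s A X Y Z)"
proof -
  let ?T = "tmul p q s A X Y Z"
  have "fro_sq r1 r2 r3 (tmul p q s A X Y' Z)
      = (\<Sum>a<r1. \<Sum>c<r3. \<Sum>b<r2. (tmul p q s A X Y' Z a b c)\<^sup>2)"
    unfolding fro_sq_def by (rule sum.cong[OF refl], rule sum.swap)
  also have "\<dots> = (\<Sum>a<r1. \<Sum>c<r3. \<Sum>b<r2. (\<Sum>d<r2. Q d b * ?T a d c)\<^sup>2)"
    by (intro sum.cong refl) (simp add: tmul_right_mult_second[OF assms(2)])
  also have "\<dots> \<le> (\<Sum>a<r1. \<Sum>c<r3. \<Sum>d<r2. (?T a d c)\<^sup>2)"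
    using assms(1) unfolding orthogonal_mat_def by (intro sum_mono orthonormal_cols_Bessel)
  also have "\<dots> = fro_sq r1 r2 r3 ?T"
    unfolding fro_sq_def by (rule sum.cong[OF refl], rule sum.swap)
  finally show ?thesis .
qed

lemma is_best_lra_undo_right_mult_second:
  assumes "is_best_lra p q s A r1 r2 r3 X Y' Z" "orthonormal_cols q r2 Y"
    and "orthogonal_mat r2 Q" "right_mult_eq q r2 Y Q Y'"
  shows "is_best_lra p q s A r1 r2 r3 X Y Z"
  using assms fro_sq_tmul_right_mult_second_le[OF assms(3,4), of r1 r3 p s A X Z]
  unfolding is_best_lra_def by fastforce

theorem proposition2p2:
  fixes m n r1 r3 :: nat and A :: tensor3
  assumes "sym12 m n A"
    and "r1 \<le> m" and "r3 \<le> n"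
    and exists_sol: "\<exists>U V W. is_best_lra m m n A r1 r1 r3 U V W"
    and unique_sol: "\<forall>U V W U' V' W'.
          is_best_lra m m n A r1 r1 r3 U V W \<and> is_best_lra m m n A r1 r1 r3 U' V' W'
          \<longrightarrow> triple_equiv m m n r1 r1 r3 U V W U' V' W'"
  shows "\<forall>U0 V0 W0. is_best_lra m m n A r1 r1 r3 U0 V0 W0 \<longrightarrow>
           (\<exists>U W. is_best_lra m m n A r1 r1 r3 U U W \<and>
                  triple_equiv m m n r1 r1 r3 U0 V0 W0 U U W \<and>
                  sym12 r1 r3 (tmul m m n A U U W))"
proof (intro allI impI)
  fix U0 V0 W0
  assume best: "is_best_lra m m n A r1 r1 r3 U0 V0 W0"
  then have "triple_equiv m m n r1 r1 r3 V0 U0 W0 U0 V0 W0"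
    using unique_sol is_best_lra_swap_sym12[OF assms(1)] by blast
  then obtain Q where Q: "orthogonal_mat r1 Q" "right_mult_eq m r1 U0 Q V0"
    unfolding triple_equiv_def by blast
  have "orthonormal_cols m r1 U0"
    using best unfolding is_best_lra_def by blast
  from best this Q have best_UUW: "is_best_lra m m n A r1 r1 r3 U0 U0 W0"
    by (rule is_best_lra_undo_right_mult_second)
  moreover have "triple_equiv m m n r1 r1 r3 U0 V0 W0 U0 U0 W0"
    using unique_sol best best_UUW by blast
  ultimately show "\<exists>U W. is_best_lra m m n A r1 r1 r3 U U W \<and>
      triple_equiv m m n r1 r1 r3 U0 V0 W0 U U W \<and> sym12 r1 r3 (tmul m m n A U U W)"
    using sym12_tmul_same[OF assms(1)] by blast
qed

end
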